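(* Suppose $L$ is in the block upper-triangular form $L=[L^{k,q}]_{k,q=1}^K$ with $L^{k,q}=0$ for $k>q$, where each diagonal block $L^{k,k}$ ($n_k\times n_k$) is irreducible or of dimension one, and for each $k<K$ there is $q>k$ with $L^{k,q}\ne0$. For $k<K$, let $\tilde L^{k,k}$, $D^k$, $\xi^k$, $\Xi^k$, $R^k$ be as defined in the context. Then $Q^k:=\frac12\big[\Xi^kL^{k,k}+(\Xi^kL^{k,k})^\top\big]=R^k+\Xi^kD^k$ is positive definite and $$\Xi^k\le\frac{\rho(\Xi^k)}{\lambda_{\min}(Q^k)}\,Q^k\quad\text{for all }k<K,$$ where $\lambda_{\min}(Q^k)$ is the smallest eigenvalue of $Q^k$ and $M\le N$ means $N-M$ is positive semidefinite.
   Context: $L=D-\mathcal A$ is the Laplacian of a weighted directed graph with nonnegative weights $a_{ij}$ ($a_{ii}=0$), so off-diagonal entries are $\le0$ and row sums of $L$ are zero. Define $\tilde L^{k,k}$ by $\tilde L^{k,k}_{ij}=L^{k,k}_{ij}$ for $i\ne j$ and $\tilde L^{k,k}_{ii}=-\sum_{p\ne i}L^{k,k}_{ip}$; let $D^k=L^{k,k}-\tilde L^{k,k}=\mathrm{diag}(D^k_1,\dots,D^k_{n_k})$ (a nonnegative diagonal matrix). Let $(\xi^k)^\top$ be the positive left eigenvector of $\tilde L^{k,k}$ for eigenvalue $0$ with components summing to $1$ (for $n_k=1$, $\xi^k=1$), $\Xi^k=\mathrm{diag}(\xi^k)$, and $R^k=\frac12[\Xi^k\tilde L^{k,k}+(\Xi^k\tilde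 L^{k,k})^\top]$. $\rho$ denotes spectral radius. *)

theory Defs
  imports "Jordan_Normal_Form.Spectral_Radius"
begin

definition laplacian :: "real mat \<Rightarrow> real mat" where
  "laplacian A = mat_diag (dim_row A) (\<lambda>i. \<Sum>p<dim_col A. A $$ (i, p)) - A"

(* blocks are numbered 1..K; block k has size nk k and starts at row/column block_start nk k *)
definition block_start :: "(nat \<Rightarrow> nat) \<Rightarrow> nat \<Rightarrow> nat" where
  "block_start nk k = (\<Sum>j\<in>{1..<k}. nk j)"

definition block :: "real mat \<Rightarrow> (nat \<Rightarrow> nat) \<Rightarrow> nat \<Rightarrow> nat \<Rightarrow> real mat" where
  "block L nk k q = mat (nk k) (nk q)
     (\<lambda>(i, j). L $$ (block_start nk k + i, block_start nk q + j))"

(* irreducible square matrix: its directed graph (edge i -> j iff i \<noteq> j and M_ij \<noteq> 0)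
   is strongly connected *)
definition irreducible_mat :: "real mat \<Rightarrow> bool" where
  "irreducible_mat M \<longleftrightarrow> (\<forall>i < dim_row M. \<forall>j < dim_row M.
     (i, j) \<in> {(a, b). a < dim_row M \<and> b < dim_row M \<and> a \<noteq> b \<and> M $$ (a, b) \<noteq> 0}\<^sup>+)"

(* \<tilde>L: same off-diagonal entries, diagonal chosen so that row sums vanish *)
definition Ltilde :: "real mat \<Rightarrow> real mat" where
  "Ltilde M = mat (dim_row M) (dim_col M)
     (\<lambda>(i, j). if i = j then - (\<Sum>p\<in>{..<dim_col M} - {i}. M $$ (i, p)) else M $$ (i, j))"

definition Dmat :: "real mat \<Rightarrow> real mat" where
  "Dmat M = M - Ltilde M"

definition Xi :: "real vec \<Rightarrow> real mat" where
  "Xi v = mat_diag (dim_vec v) (\<lambda>i. v $ i)"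

definition sym_part :: "real mat \<Rightarrow> real mat" where
  "sym_part M = (1/2 :: real) \<cdot>\<^sub>m (M + transpose_mat M)"

definition pos_def :: "real mat \<Rightarrow> bool" where
  "pos_def Q \<longleftrightarrow> Q \<in> carrier_mat (dim_row Q) (dim_row Q) \<and>
     (\<forall>x \<in> carrier_vec (dim_row Q). x \<noteq> 0\<^sub>v (dim_row Q) \<longrightarrow> x \<bullet> (Q *\<^sub>v x) > 0)"

definition loewner_le :: "real mat \<Rightarrow> real mat \<Rightarrow> bool" where
  "loewner_le M N \<longleftrightarrow> (\<forall>x \<in> carrier_vec (dim_row M). 0 \<le> x \<bullet> ((N - M) *\<^sub>v x))"

definition lambda_min :: "real mat \<Rightarrow> real" where
  "lambda_min Q = Min {e. eigenvalue Q e}"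

definition rho :: "real mat \<Rightarrow> real" where
  "rho M = spectral_radius (map_mat complex_of_real M)"

end

theory Submission imports Defs "HOL-Analysis.Function_Topology" begin

(* Let M = L^{k,k} be a diagonal block and \<xi> a positive left null vector of \<tilde>M.
   Writing w_ij = -M_ij (i \<noteq> j) for the edge weights and D_i for the i-th row sum
   of M (the diagonal of D^k), the quadratic form of Q = sym(\<Xi> M) is
      x^T Q x = \<Sum>_i \<xi>_i D_i x_i^2 + 1/2 \<Sum>_{i,j} \<xi>_i w_ij (x_i - x_j)^2,
   where \<xi>^T \<tilde>M = 0 is exactly what balances the cross terms.  Both sums are
   nonnegative; if the form vanishes, x is constant along the edges of the
   (irreducible) block and vanishes where D_i > 0, which happens in some row since
   block k is coupled to a later block.

   The Loewner bound then follows from the Rayleigh inequality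
   \<lambda>_min(Q) |x|^2 \<le> x^T Q x for symmetric Q, proved by minimising the quadratic form
   on the (compact) unit sphere and showing that a minimiser is an eigenvector, and
   from \<xi>_i \<le> \<rho>(\<Xi>), as every \<xi>_i is an eigenvalue of the diagonal matrix \<Xi>. *)

(* x^T M x and |x|^2 for x given by its first n coordinates; working with functions
   nat \<Rightarrow> real lets us use the product topology for the compactness argument. *)
definition qform :: "nat \<Rightarrow> (nat \<Rightarrow> nat \<Rightarrow> real) \<Rightarrow> (nat \<Rightarrow> real) \<Rightarrow> real" where
  "qform n M f = (\<Sum>i<n. \<Sum>j<n. f i * M i j * f j)"

definition sqnorm :: "nat \<Rightarrow> (nat \<Rightarrow> real) \<Rightarrow> real" where
  "sqnorm n f = (\<Sum>i<n. (f i)\<^sup>2)"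

lemma scalar_prod_mult_mat_vec_qform:
  assumes "M \<in> carrier_mat n n" "x \<in> carrier_vec n"
  shows "x \<bullet> (M *\<^sub>v x) = qform n (\<lambda>i j. M $$ (i, j)) (\<lambda>i. x $ i)"
  using assms
  by (auto simp: qform_def scalar_prod_def mult_mat_vec_def row_def sum_distrib_left
      lessThan_atLeast0 ac_simps intro!: sum.cong)

lemma scalar_prod_self_sqnorm:
  "x \<in> carrier_vec n \<Longrightarrow> x \<bullet> x = sqnorm n (\<lambda>i. x $ i)"
  by (simp add: sqnorm_def scalar_prod_def lessThan_atLeast0 power2_eq_square)

lemma sqnorm_nonneg: "0 \<le> sqnorm n f"
  by (simp add: sqnorm_def sum_nonneg)

lemma qform_scale: "qform n M (\<lambda>i. c * f i) = c\<^sup>2 * qform n M f"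
  by (simp add: qform_def sum_distrib_left power2_eq_square ac_simps)

lemma sqnorm_scale: "sqnorm n (\<lambda>i. c * f i) = c\<^sup>2 * sqnorm n f"
  by (simp add: sqnorm_def sum_distrib_left power_mult_distrib)

lemma qform_linear:
  "qform n (\<lambda>i j. c * A i j - B i j) f = c * qform n A f - qform n B f"
  by (simp add: qform_def algebra_simps sum_subtractf sum_distrib_left)

section \<open>The Rayleigh inequality\<close>

lemma continuous_on_coordinate: "continuous_on S (\<lambda>f::nat \<Rightarrow> real. f i)"
  by (rule continuous_on_subset[of UNIV]) simp_all

(* The unit sphere of R^n, as functions vanishing from n on.  The box condition is
   implied by the norm condition but makes compactness in the product topology evident. *)
definition unit_sphere :: "nat \<Rightarrow> (nat \<Rightarrow> real) set" where
  "unit_sphere n = PiE UNIV (\<lambda>i. if i < n then {-1..1} else {0}) \<inter> {f. sqnorm n f = 1}"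

lemma compact_unit_sphere: "compact (unit_sphere n)"
  unfolding unit_sphere_def
proof (rule compact_Int_closed)
  have "compactin (product_topology (\<lambda>i. euclidean) UNIV)
          (PiE UNIV (\<lambda>i::nat. if i < n then {-1..1} else {0::real}))"
    by (subst compactin_PiE) auto
  then show "compact (PiE UNIV (\<lambda>i::nat. if i < n then {-1..1} else {0::real}))"
    by (simp add: euclidean_product_topology)
  show "closed {f. sqnorm n f = 1}"
    unfolding sqnorm_def
    by (rule closed_Collect_eq) (intro continuous_intros continuous_on_coordinate)+
qed

(* Some unit vector minimises the Rayleigh quotient; by homogeneity this gives a
   lower bound valid for all vectors. *)
lemma qform_min_on_unit_sphere:
  assumes n: "n > 0"
  shows "\<exists>f. sqnorm n f = 1 \<and> (\<forall>z. qform n M f * sqnorm n z \<le> qform n M z)"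
proof -
  have "sqnorm n (\<lambda>i. if i = 0 then 1 else 0) = (\<Sum>i<n. if i = 0 then 1 else 0)"
    unfolding sqnorm_def by (rule sum.cong) auto
  then have e0: "(\<lambda>i. if i = 0 then 1 else 0::real) \<in> unit_sphere n"
    using n by (auto simp: unit_sphere_def PiE_iff)
  have "continuous_on (unit_sphere n) (qform n M)"
    unfolding qform_def
    by (intro continuous_intros continuous_on_coordinate)
  then obtain f where fS: "f \<in> unit_sphere n"
    and fmin: "\<And>y. y \<in> unit_sphere n \<Longrightarrow> qform n M f \<le> qform n M y"
    using continuous_attains_inf[OF compact_unit_sphere] e0 by blast
  have "qform n M f * sqnorm n z \<le> qform n M z" for z
  proof (cases "sqnorm n z = 0")
    case True
    then have "\<forall>i<n. z i = 0" by (simp add: sqnorm_def sum_nonneg_eq_0_iff)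
    then show ?thesis using True by (simp add: qform_def)
  next
    case False
    define r where "r = sqrt (sqnorm n z)"
    have r: "r\<^sup>2 > 0" "r\<^sup>2 = sqnorm n z"
      using False sqnorm_nonneg[of n z] by (auto simp: r_def)
    define y where "y i = (if i < n then z i / r else 0)" for i
    have y_eq: "qform n M y = qform n M (\<lambda>i. (1 / r) * z i)"
      "sqnorm n y = sqnorm n (\<lambda>i. (1 / r) * z i)"
      by (simp_all add: qform_def sqnorm_def y_def)
    have y_norm: "sqnorm n y = 1"
      unfolding y_eq(2) sqnorm_scale using r False by (simp add: power_divide)
    have y_bound: "\<bar>y i\<bar> \<le> 1" for i
    proof -
      have "(y i)\<^sup>2 \<le> sqnorm n y"
        unfolding sqnorm_def by (cases "i < n") (auto simp: y_def intro: member_le_sum sum_nonneg)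
      then show ?thesis using y_norm by (simp add: abs_square_le_1)
    qed
    have "y i \<in> (if i < n then {-1..1} else {0})" for i
      using y_bound[of i] by (auto simp: y_def abs_le_iff)
    then have "y \<in> unit_sphere n"
      using y_norm by (auto simp: unit_sphere_def PiE_iff)
    then have "qform n M f \<le> qform n M z / r\<^sup>2"
      using fmin[of y] unfolding y_eq(1) qform_scale by (simp add: power_divide)
    then show ?thesis using r by (simp add: le_divide_eq mult.commute)
  qed
  moreover have "sqnorm n f = 1" using fS by (simp add: unit_sphere_def)
  ultimately show ?thesis by blast
qed

lemma quadratic_nonneg_linear_coeff:
  fixes a b :: real
  assumes "\<And>t. 0 \<le> 2 * t * a + t\<^sup>2 * b"
  shows "a = 0"
proof (rule ccontr)
  assume a: "a \<noteq> 0"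
  define c where "c = \<bar>b\<bar> + 1"
  have c: "c > 0" by (simp add: c_def)
  have "0 \<le> (2 * (-a / c) * a + (-a / c)\<^sup>2 * b) * c\<^sup>2"
    using assms[of "-a / c"] by simp
  also have "\<dots> = a\<^sup>2 * (b - 2 * c)"
    using c by (simp add: field_simps power2_eq_square)
  finally have "0 \<le> b - 2 * c" using a by (simp add: zero_le_mult_iff)
  then show False by (simp add: c_def)
qed

(* If a positive semidefinite symmetric form vanishes at f, then M f = 0: otherwise
   moving from f in the direction M f would make the form negative. *)
lemma psd_qform_zero_kernel:
  fixes M :: "nat \<Rightarrow> nat \<Rightarrow> real"
  assumes sym: "\<And>i j. i < n \<Longrightarrow> j < n \<Longrightarrow> M i j = M j i"
    and psd: "\<And>z. 0 \<le> qform n M z"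
    and zero: "qform n M f = 0"
    and i: "i < n"
  shows "(\<Sum>j<n. M i j * f j) = 0"
proof -
  define r where "r i = (\<Sum>j<n. M i j * f j)" for i
  have cross: "(\<Sum>i<n. \<Sum>j<n. f i * M i j * r j) = (\<Sum>i<n. (r i)\<^sup>2)"
    by (subst sum.swap)
      (auto simp: r_def power2_eq_square sum_distrib_left sum_distrib_right sym ac_simps
        intro!: sum.cong)
  have expand: "qform n M (\<lambda>i. f i + t * r i)
      = qform n M f + 2 * t * (\<Sum>i<n. (r i)\<^sup>2) + t\<^sup>2 * qform n M r" for t
  proof -
    have "qform n M (\<lambda>i. f i + t * r i) = qform n M f
        + t * (\<Sum>i<n. \<Sum>j<n. f i * M i j * r j) + t * (\<Sum>i<n. \<Sum>j<n. r i * M i j * f j)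
        + t\<^sup>2 * qform n M r"
      by (simp add: qform_def algebra_simps power2_eq_square sum.distrib sum_distrib_left)
    also have "(\<Sum>i<n. \<Sum>j<n. r i * M i j * f j) = (\<Sum>i<n. \<Sum>j<n. f i * M i j * r j)"
      by (subst sum.swap) (auto simp: sym ac_simps intro!: sum.cong)
    finally show ?thesis by (simp add: cross)
  qed
  have "(\<Sum>i<n. (r i)\<^sup>2) = 0"
    by (rule quadratic_nonneg_linear_coeff[where b = "qform n M r"])
      (use psd[of "\<lambda>i. f i + _ * r i"] in \<open>simp add: expand zero\<close>)
  then show ?thesis using i by (simp add: r_def sum_nonneg_eq_0_iff)
qed

(* Rayleigh: the minimum \<mu> of x^T Q x on the unit sphere is an eigenvalue of a
   symmetric Q, since Q - \<mu> I is positive semidefinite and vanishes at the minimiser. *)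
lemma rayleigh_eigenvalue:
  fixes Q :: "real mat"
  assumes Q: "Q \<in> carrier_mat n n" and sym: "transpose_mat Q = Q" and n: "n > 0"
  shows "\<exists>\<mu>. eigenvalue Q \<mu> \<and> (\<forall>x\<in>carrier_vec n. \<mu> * (x \<bullet> x) \<le> x \<bullet> (Q *\<^sub>v x))"
proof -
  define q where "q i j = Q $$ (i, j)" for i j
  obtain f where f1: "sqnorm n f = 1" and fmin: "\<And>z. qform n q f * sqnorm n z \<le> qform n q z"
    using qform_min_on_unit_sphere[OF n] by blast
  define \<mu> where "\<mu> = qform n q f"
  define M where "M i j = q i j - (if i = j then \<mu> else 0)" for i j
  have qform_M: "qform n M z = qform n q z - \<mu> * sqnorm n z" for z
  proof -
    have "qform n M z = (\<Sum>i<n. \<Sum>j<n. z i * q i j * z j - (if i = j then \<mu> * (z i)\<^sup>2 else 0))"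
      unfolding qform_def M_def by (intro sum.cong) (auto simp: algebra_simps power2_eq_square)
    then show ?thesis
      by (simp add: qform_def sqnorm_def sum_subtractf sum_distrib_left)
  qed
  have q_sym: "q i j = q j i" if "i < n" "j < n" for i j
    using that Q arg_cong[OF sym, of "\<lambda>A. A $$ (i, j)"] by (simp add: q_def)
  have M_sym: "M i j = M j i" if "i < n" "j < n" for i j
    using q_sym[OF that] by (simp add: M_def)
  have M_psd: "0 \<le> qform n M z" for z
    using fmin[of z] by (simp add: qform_M \<mu>_def)
  have M_f: "qform n M f = 0"
    by (simp add: qform_M \<mu>_def f1)
  have ker: "(\<Sum>j<n. M i j * f j) = 0" if "i < n" for i
    using psd_qform_zero_kernel[of n M] M_sym M_psd M_f that by blast
  have "eigenvector Q (vec n f) \<mu>"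
  proof -
    have "Q *\<^sub>v vec n f = \<mu> \<cdot>\<^sub>v vec n f"
    proof (rule eq_vecI)
      fix i assume "i < dim_vec (\<mu> \<cdot>\<^sub>v vec n f)"
      then have i: "i < n" by simp
      have "(\<Sum>j<n. M i j * f j) = (\<Sum>j<n. q i j * f j - (if i = j then \<mu> * f j else 0))"
        by (intro sum.cong) (auto simp: M_def algebra_simps)
      also have "\<dots> = (\<Sum>j<n. q i j * f j) - \<mu> * f i"
        using i by (simp add: sum_subtractf sum.delta)
      finally have "(\<Sum>j<n. q i j * f j) = \<mu> * f i" using ker[OF i] by simp
      then show "(Q *\<^sub>v vec n f) $ i = (\<mu> \<cdot>\<^sub>v vec n f) $ i"
        using Q i by (simp add: q_def scalar_prod_def lessThan_atLeast0 ac_simps)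
    qed (use Q in simp)
    moreover have "vec n f \<noteq> 0\<^sub>v n"
    proof
      assume "vec n f = 0\<^sub>v n"
      then have "\<forall>i<n. f i = 0" by (metis index_vec index_zero_vec(1))
      then show False using f1 by (simp add: sqnorm_def)
    qed
    ultimately show ?thesis using Q by (auto simp: eigenvector_def)
  qed
  moreover have "\<mu> * (x \<bullet> x) \<le> x \<bullet> (Q *\<^sub>v x)" if "x \<in> carrier_vec n" for x
    using fmin[of "\<lambda>i. x $ i"] that Q
    unfolding \<mu>_def q_def
    by (simp add: scalar_prod_mult_mat_vec_qform scalar_prod_self_sqnorm mult.commute)
  ultimately show ?thesis unfolding eigenvalue_def by blast
qed

lemma lambda_min_le_quadratic_form:
  fixes Q :: "real mat"
  assumes Q: "Q \<in> carrier_mat n n" and sym: "transpose_mat Q = Q" and n: "n > 0"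
  shows "eigenvalue Q (lambda_min Q)"
    and "\<And>x. x \<in> carrier_vec n \<Longrightarrow> lambda_min Q * (x \<bullet> x) \<le> x \<bullet> (Q *\<^sub>v x)"
proof -
  obtain \<mu> where ev: "eigenvalue Q \<mu>"
    and bound: "\<forall>x\<in>carrier_vec n. \<mu> * (x \<bullet> x) \<le> x \<bullet> (Q *\<^sub>v x)"
    using rayleigh_eigenvalue[OF Q sym n] by blast
  have fin: "finite {e. eigenvalue Q e}"
    using card_finite_spectrum(1)[OF Q] by (simp add: spectrum_def)
  show "eigenvalue Q (lambda_min Q)"
    using Min_in[OF fin] ev by (auto simp: lambda_min_def)
  have le: "lambda_min Q \<le> \<mu>"
    using Min_le[OF fin] ev by (simp add: lambda_min_def)
  fix x :: "real vec" assume x: "x \<in> carrier_vec n"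
  have "0 \<le> x \<bullet> x" using x by (simp add: scalar_prod_self_sqnorm sqnorm_nonneg)
  then have "lambda_min Q * (x \<bullet> x) \<le> \<mu> * (x \<bullet> x)" by (rule mult_right_mono[OF le])
  also have "\<dots> \<le> x \<bullet> (Q *\<^sub>v x)" using bound x by blast
  finally show "lambda_min Q * (x \<bullet> x) \<le> x \<bullet> (Q *\<^sub>v x)" .
qed

lemma lambda_min_pos:
  fixes Q :: "real mat"
  assumes Q: "Q \<in> carrier_mat n n" and sym: "transpose_mat Q = Q" and n: "n > 0"
    and pd: "pos_def Q"
  shows "lambda_min Q > 0"
proof -
  obtain u where u: "u \<in> carrier_vec n" "u \<noteq> 0\<^sub>v n" "Q *\<^sub>v u = lambda_min Q \<cdot>\<^sub>v u"
    using lambda_min_le_quadratic_form(1)[OF Q sym n] Q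
    by (auto simp: eigenvalue_def eigenvector_def)
  have "0 < u \<bullet> (Q *\<^sub>v u)" using pd u Q by (auto simp: pos_def_def)
  also have "\<dots> = lambda_min Q * (u \<bullet> u)" using u by simp
  finally show ?thesis
    using u(1) by (simp add: zero_less_mult_iff scalar_prod_self_sqnorm
        sqnorm_nonneg[THEN leD])
qed

definition row_sum :: "real mat \<Rightarrow> nat \<Rightarrow> real" where
  "row_sum M i = (\<Sum>p<dim_col M. M $$ (i, p))"

definition edge_weight :: "real mat \<Rightarrow> nat \<Rightarrow> nat \<Rightarrow> real" where
  "edge_weight M i j = (if i = j then 0 else - M $$ (i, j))"

lemma Ltilde_entry:
  assumes "M \<in> carrier_mat n n" "i < n" "j < n"
  shows "Ltilde M $$ (i, j) = (if i = j then (\<Sum>p<n. edge_weight M i p) else 0) - edge_weight M i j"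
proof -
  have "(\<Sum>p<n. edge_weight M i p) = - (\<Sum>p\<in>{..<n} - {i}. M $$ (i, p))"
    using assms(2) by (simp add: edge_weight_def sum.remove[of "{..<n}" i] sum_negf
        if_distrib[of uminus] sum.If_cases Diff_eq Int_commute)
  then show ?thesis using assms by (cases "i = j") (simp_all add: Ltilde_def edge_weight_def)
qed

lemma Dmat_entry:
  assumes "M \<in> carrier_mat n n" "i < n" "j < n"
  shows "Dmat M $$ (i, j) = (if i = j then row_sum M i else 0)"
proof -
  have "row_sum M i = M $$ (i, i) + (\<Sum>p\<in>{..<n} - {i}. M $$ (i, p))"
    using assms by (simp add: row_sum_def sum.remove[of "{..<n}" i])
  then show ?thesis using assms by (cases "i = j") (simp_all add: Dmat_def Ltilde_def)
qed

lemma mat_entry_weights: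
  assumes "M \<in> carrier_mat n n" "i < n" "j < n"
  shows "M $$ (i, j) = (if i = j then (\<Sum>p<n. edge_weight M i p) + row_sum M i else 0)
                        - edge_weight M i j"
proof -
  have "M $$ (i, j) = Ltilde M $$ (i, j) + Dmat M $$ (i, j)"
    using assms by (simp add: Dmat_def Ltilde_def)
  then show ?thesis using assms by (simp add: Ltilde_entry Dmat_entry)
qed

lemma Xi_mult:
  "v \<in> carrier_vec n \<Longrightarrow> M \<in> carrier_mat n n \<Longrightarrow>
   Xi v * M = mat n n (\<lambda>(i, j). v $ i * M $$ (i, j))"
  unfolding Xi_def by (simp add: mat_diag_mult_left)

lemma sym_part_carrier: "M \<in> carrier_mat n n \<Longrightarrow> sym_part M \<in> carrier_mat n n"
  by (simp add: sym_part_def)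

lemma sym_part_entry:
  "M \<in> carrier_mat n n \<Longrightarrow> i < n \<Longrightarrow> j < n \<Longrightarrow>
   sym_part M $$ (i, j) = 1/2 * (M $$ (i, j) + M $$ (j, i))"
  by (simp add: sym_part_def)

lemma sym_part_symmetric:
  assumes "M \<in> carrier_mat n n"
  shows "transpose_mat (sym_part M) = sym_part M"
  using assms by (intro eq_matI) (auto simp: sym_part_def)

lemma quadratic_form_sym_part:
  assumes M: "M \<in> carrier_mat n n" and x: "x \<in> carrier_vec n"
  shows "x \<bullet> (sym_part M *\<^sub>v x) = x \<bullet> (M *\<^sub>v x)"
proof -
  have swap: "(\<Sum>i<n. \<Sum>j<n. x $ i * M $$ (j, i) * x $ j) = qform n (\<lambda>i j. M $$ (i, j)) (\<lambda>i. x $ i)"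
    unfolding qform_def by (subst sum.swap) (simp add: ac_simps)
  have "x \<bullet> (sym_part M *\<^sub>v x) = qform n (\<lambda>i j. sym_part M $$ (i, j)) (\<lambda>i. x $ i)"
    by (rule scalar_prod_mult_mat_vec_qform[OF sym_part_carrier[OF M] x])
  also have "\<dots> = (\<Sum>i<n. \<Sum>j<n. 1/2 * (x $ i * M $$ (i, j) * x $ j)
                                 + 1/2 * (x $ i * M $$ (j, i) * x $ j))"
    unfolding qform_def by (intro sum.cong refl) (simp add: sym_part_entry[OF M] algebra_simps)
  also have "\<dots> = 1/2 * qform n (\<lambda>i j. M $$ (i, j)) (\<lambda>i. x $ i)
        + 1/2 * (\<Sum>i<n. \<Sum>j<n. x $ i * M $$ (j, i) * x $ j)"
    by (simp add: qform_def sum.distrib sum_distrib_left)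
  finally show ?thesis by (simp add: swap scalar_prod_mult_mat_vec_qform[OF M x])
qed

lemma sym_part_Xi_decomp:
  assumes M: "M \<in> carrier_mat n n" and v: "v \<in> carrier_vec n"
  shows "sym_part (Xi v * M) = sym_part (Xi v * Ltilde M) + Xi v * Dmat M"
proof (rule eq_matI)
  have Lt: "Ltilde M \<in> carrier_mat n n" and D: "Dmat M \<in> carrier_mat n n"
    using M by (auto simp: Ltilde_def Dmat_def)
  fix i j assume "i < dim_row (sym_part (Xi v * Ltilde M) + Xi v * Dmat M)"
    "j < dim_col (sym_part (Xi v * Ltilde M) + Xi v * Dmat M)"
  then have i: "i < n" and j: "j < n"
    using Lt D by (auto simp: sym_part_def Xi_mult[OF v])
  have "M $$ (i, j) = Ltilde M $$ (i, j) + Dmat M $$ (i, j)"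
    "M $$ (j, i) = Ltilde M $$ (j, i) + Dmat M $$ (j, i)"
    using M i j by (simp_all add: Dmat_def Ltilde_def)
  then show "sym_part (Xi v * M) $$ (i, j) = (sym_part (Xi v * Ltilde M) + Xi v * Dmat M) $$ (i, j)"
    using M Lt D i j
    by (simp add: sym_part_def Xi_mult[OF v] Dmat_entry[OF M] algebra_simps)
qed (use M v in \<open>auto simp: sym_part_def Xi_mult[OF v] Ltilde_def Dmat_def Xi_def mat_diag_def\<close>)

section \<open>Positive definiteness of sym(\<Xi> M)\<close>

(* \<xi>^T \<tilde>M = 0 says that at every node the weighted out-flow equals the in-flow. *)
lemma left_null_balance:
  assumes M: "M \<in> carrier_mat n n" and v: "v \<in> carrier_vec n"
    and null: "transpose_mat (Ltilde M) *\<^sub>v v = 0\<^sub>v n" and j: "j < n"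
  shows "v $ j * (\<Sum>p<n. edge_weight M j p) = (\<Sum>i<n. v $ i * edge_weight M i j)"
proof -
  have Lt: "Ltilde M \<in> carrier_mat n n" using M by (simp add: Ltilde_def)
  have "0 = (transpose_mat (Ltilde M) *\<^sub>v v) $ j" using null j by simp
  also have "\<dots> = (\<Sum>i<n. Ltilde M $$ (i, j) * v $ i)"
    using Lt v j by (simp add: scalar_prod_def lessThan_atLeast0)
  also have "\<dots> = (\<Sum>i<n. (if i = j then v $ j * (\<Sum>p<n. edge_weight M j p) else 0)
                        - v $ i * edge_weight M i j)"
    using M j by (intro sum.cong refl) (auto simp: Ltilde_entry algebra_simps)
  also have "\<dots> = v $ j * (\<Sum>p<n. edge_weight M j p) - (\<Sum>i<n. v $ i * edge_weight M i j)"
    using j by (simp add: sum_subtractf sum.delta')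
  finally show ?thesis by simp
qed

(* The weighted Laplacian identity: with balanced weights the cross terms of
   \<Sum>_ij \<xi>_i M_ij x_i x_j combine into a sum of squared differences. *)
lemma weighted_laplacian_form:
  fixes w :: "nat \<Rightarrow> nat \<Rightarrow> real" and \<xi> d x :: "nat \<Rightarrow> real"
  assumes balance: "\<And>j. j < n \<Longrightarrow> \<xi> j * (\<Sum>p<n. w j p) = (\<Sum>i<n. \<xi> i * w i j)"
  shows "(\<Sum>i<n. \<Sum>j<n. \<xi> i * ((if i = j then (\<Sum>p<n. w i p) + d i else 0) - w i j) * x i * x j)
       = (\<Sum>i<n. \<xi> i * d i * (x i)\<^sup>2) + 1/2 * (\<Sum>i<n. \<Sum>j<n. \<xi> i * w i j * (x i - x j)\<^sup>2)"
proof -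
  define out where "out i = (\<Sum>p<n. w i p)" for i
  define C where "C = (\<Sum>i<n. \<Sum>j<n. \<xi> i * w i j * x i * x j)"
  have "(\<Sum>i<n. \<Sum>j<n. \<xi> i * ((if i = j then out i + d i else 0) - w i j) * x i * x j)
      = (\<Sum>i<n. \<Sum>j<n. (if i = j then \<xi> i * (out i + d i) * x i * x i else 0)
                         - \<xi> i * w i j * x i * x j)"
    by (intro sum.cong refl) (auto simp: algebra_simps)
  also have "\<dots> = (\<Sum>i<n. \<xi> i * d i * (x i)\<^sup>2) + (\<Sum>i<n. \<xi> i * out i * (x i)\<^sup>2) - C"
    by (simp add: sum_subtractf C_def sum.delta algebra_simps sum.distrib power2_eq_square)
  finally have lhs: "(\<Sum>i<n. \<Sum>j<n. \<xi> i * ((if i = j then out i + d i else 0) - w i j) * x i * x j)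
      = (\<Sum>i<n. \<xi> i * d i * (x i)\<^sup>2) + (\<Sum>i<n. \<xi> i * out i * (x i)\<^sup>2) - C" .
  have out_src: "(\<Sum>i<n. \<xi> i * out i * (x i)\<^sup>2) = (\<Sum>i<n. \<Sum>j<n. \<xi> i * w i j * (x i)\<^sup>2)"
    by (simp add: out_def sum_distrib_left sum_distrib_right algebra_simps)
  have "(\<Sum>i<n. \<xi> i * out i * (x i)\<^sup>2) = (\<Sum>j<n. (\<Sum>i<n. \<xi> i * w i j) * (x j)\<^sup>2)"
    using balance by (intro sum.cong refl) (simp add: out_def)
  also have "\<dots> = (\<Sum>i<n. \<Sum>j<n. \<xi> i * w i j * (x j)\<^sup>2)"
    by (subst sum.swap) (simp add: sum_distrib_right)
  finally have out_dst: "(\<Sum>i<n. \<xi> i * out i * (x i)\<^sup>2) = (\<Sum>i<n. \<Sum>j<n. \<xi> i * w i j * (x j)\<^sup>2)" .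
  have "(\<Sum>i<n. \<Sum>j<n. \<xi> i * w i j * (x i - x j)\<^sup>2)
      = (\<Sum>i<n. \<Sum>j<n. \<xi> i * w i j * (x i)\<^sup>2 + \<xi> i * w i j * (x j)\<^sup>2
                         - 2 * (\<xi> i * w i j * x i * x j))"
    by (intro sum.cong refl) (simp add: algebra_simps power2_eq_square)
  also have "\<dots> = (\<Sum>i<n. \<Sum>j<n. \<xi> i * w i j * (x i)\<^sup>2)
                   + (\<Sum>i<n. \<Sum>j<n. \<xi> i * w i j * (x j)\<^sup>2) - 2 * C"
    by (simp add: sum.distrib sum_subtractf C_def sum_distrib_left)
  finally have squares: "(\<Sum>i<n. \<Sum>j<n. \<xi> i * w i j * (x i - x j)\<^sup>2)
      = (\<Sum>i<n. \<Sum>j<n. \<xi> i * w i j * (x i)\<^sup>2)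
        + (\<Sum>i<n. \<Sum>j<n. \<xi> i * w i j * (x j)\<^sup>2) - 2 * C" .
  show ?thesis
    unfolding out_def[symmetric] lhs squares out_src[symmetric] out_dst[symmetric] by simp
qed

lemma quadratic_form_sym_part_Xi:
  assumes M: "M \<in> carrier_mat n n" and v: "v \<in> carrier_vec n"
    and null: "transpose_mat (Ltilde M) *\<^sub>v v = 0\<^sub>v n" and x: "x \<in> carrier_vec n"
  shows "x \<bullet> (sym_part (Xi v * M) *\<^sub>v x)
       = (\<Sum>i<n. v $ i * row_sum M i * (x $ i)\<^sup>2)
         + 1/2 * (\<Sum>i<n. \<Sum>j<n. v $ i * edge_weight M i j * (x $ i - x $ j)\<^sup>2)"
proof -
  have XM: "Xi v * M \<in> carrier_mat n n" using Xi_mult[OF v M] by simp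
  have "x \<bullet> (sym_part (Xi v * M) *\<^sub>v x) = qform n (\<lambda>i j. (Xi v * M) $$ (i, j)) (\<lambda>i. x $ i)"
    by (simp add: quadratic_form_sym_part[OF XM x] scalar_prod_mult_mat_vec_qform[OF XM x])
  also have "\<dots> = (\<Sum>i<n. \<Sum>j<n. v $ i * ((if i = j then (\<Sum>p<n. edge_weight M i p) + row_sum M i
                                               else 0) - edge_weight M i j) * x $ i * x $ j)"
    unfolding qform_def
    by (intro sum.cong refl) (simp add: Xi_mult[OF v M] mat_entry_weights[OF M] ac_simps)
  also have "\<dots> = (\<Sum>i<n. v $ i * row_sum M i * (x $ i)\<^sup>2)
         + 1/2 * (\<Sum>i<n. \<Sum>j<n. v $ i * edge_weight M i j * (x $ i - x $ j)\<^sup>2)"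
    by (rule weighted_laplacian_form) (rule left_null_balance[OF M v null])
  finally show ?thesis .
qed

lemma constant_on_irreducible:
  assumes irr: "irreducible_mat M" and M: "M \<in> carrier_mat n n"
    and edge: "\<And>i j. i < n \<Longrightarrow> j < n \<Longrightarrow> i \<noteq> j \<Longrightarrow> M $$ (i, j) \<noteq> 0 \<Longrightarrow> f i = f j"
    and i: "i < n" and j: "j < n"
  shows "f i = f j"
proof -
  have "(i, j) \<in> {(a, b). a < n \<and> b < n \<and> a \<noteq> b \<and> M $$ (a, b) \<noteq> 0}\<^sup>+"
    using irr i j M unfolding irreducible_mat_def by auto
  then show ?thesis
    by (induction rule: trancl_induct) (auto dest: edge)
qed

lemma pos_def_sym_part_Xi:
  assumes M: "M \<in> carrier_mat n n" and v: "v \<in> carrier_vec n"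
    and v_pos: "\<And>i. i < n \<Longrightarrow> 0 < v $ i"
    and null: "transpose_mat (Ltilde M) *\<^sub>v v = 0\<^sub>v n"
    and offdiag: "\<And>i j. i < n \<Longrightarrow> j < n \<Longrightarrow> i \<noteq> j \<Longrightarrow> M $$ (i, j) \<le> 0"
    and row_nonneg: "\<And>i. i < n \<Longrightarrow> 0 \<le> row_sum M i"
    and i0: "i0 < n" "0 < row_sum M i0"
    and irr: "irreducible_mat M \<or> n = 1"
  shows "pos_def (sym_part (Xi v * M))"
proof -
  have XM: "Xi v * M \<in> carrier_mat n n" using Xi_mult[OF v M] by simp
  have Q: "sym_part (Xi v * M) \<in> carrier_mat n n" by (rule sym_part_carrier[OF XM])
  have "0 < x \<bullet> (sym_part (Xi v * M) *\<^sub>v x)" if x: "x \<in> carrier_vec n" and x0: "x \<noteq> 0\<^sub>v n" for x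
  proof (rule ccontr)
    define T1 where "T1 i = v $ i * row_sum M i * (x $ i)\<^sup>2" for i
    define T2 where "T2 i j = v $ i * edge_weight M i j * (x $ i - x $ j)\<^sup>2" for i j
    have T1: "0 \<le> T1 i" if "i < n" for i
      using v_pos[OF that] row_nonneg[OF that] by (simp add: T1_def)
    have T2: "0 \<le> T2 i j" if "i < n" "j < n" for i j
      using v_pos[OF that(1)] offdiag[OF that] by (simp add: T2_def edge_weight_def)
    assume "\<not> 0 < x \<bullet> (sym_part (Xi v * M) *\<^sub>v x)"
    then have "(\<Sum>i<n. T1 i) + 1/2 * (\<Sum>i<n. \<Sum>j<n. T2 i j) \<le> 0"
      by (simp add: quadratic_form_sym_part_Xi[OF M v null x] T1_def T2_def)
    moreover have "0 \<le> (\<Sum>i<n. T1 i)" "0 \<le> (\<Sum>i<n. \<Sum>j<n. T2 i j)"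
      using T1 T2 by (auto intro!: sum_nonneg)
    ultimately have sums: "(\<Sum>i<n. T1 i) = 0" "(\<Sum>i<n. \<Sum>j<n. T2 i j) = 0" by auto
    have T1_0: "T1 i = 0" if "i < n" for i
      using sum_nonneg_eq_0_iff[of "{..<n}" T1] sums(1) T1 that by auto
    have "(\<Sum>j<n. T2 i j) = 0" if "i < n" for i
      using sum_nonneg_eq_0_iff[of "{..<n}" "\<lambda>i. \<Sum>j<n. T2 i j"] sums(2) T2 that
      by (auto intro: sum_nonneg)
    then have T2_0: "T2 i j = 0" if "i < n" "j < n" for i j
      using sum_nonneg_eq_0_iff[of "{..<n}" "T2 i"] T2 that by auto
    have x_i0: "x $ i0 = 0" using T1_0[OF i0(1)] v_pos[OF i0(1)] i0(2) by (simp add: T1_def)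
    have "x $ i = x $ j" if "i < n" "j < n" "i \<noteq> j" "M $$ (i, j) \<noteq> 0" for i j
      using T2_0[OF that(1,2)] v_pos[OF that(1)] that(3,4) by (simp add: T2_def edge_weight_def)
    then have "x $ i = x $ i0" if "i < n" for i
      using irr constant_on_irreducible[OF _ M, of "\<lambda>i. x $ i" i i0] that i0(1) by auto
    then have "x = 0\<^sub>v n" using x x_i0 by (intro eq_vecI) auto
    with x0 show False by simp
  qed
  then show ?thesis using Q by (simp add: pos_def_def)
qed

section \<open>The Loewner bound for a diagonal matrix\<close>

(* Each diagonal entry of \<Xi> = diag(v) is an eigenvalue, so |v_i| \<le> \<rho>(\<Xi>). *)
lemma abs_entry_le_rho_Xi:
  assumes v: "v \<in> carrier_vec n" and i: "i < n"
  shows "\<bar>v $ i\<bar> \<le> rho (Xi v)"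
proof -
  define C where "C = map_mat complex_of_real (Xi v)"
  have C: "C \<in> carrier_mat n n" using v by (simp add: C_def Xi_def)
  have "C *\<^sub>v unit_vec n i = complex_of_real (v $ i) \<cdot>\<^sub>v unit_vec n i"
  proof (rule eq_vecI)
    fix j assume "j < dim_vec (complex_of_real (v $ i) \<cdot>\<^sub>v unit_vec n i)"
    then have j: "j < n" by simp
    have "(C *\<^sub>v unit_vec n i) $ j = C $$ (j, i)"
      using C i j by (simp add: scalar_prod_right_unit)
    then show "(C *\<^sub>v unit_vec n i) $ j = (complex_of_real (v $ i) \<cdot>\<^sub>v unit_vec n i) $ j"
      using i j v by (simp add: C_def Xi_def mat_diag_def unit_vec_def)
  qed (use C in simp)
  then have "eigenvector C (unit_vec n i) (complex_of_real (v $ i))"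
    using C i unit_vec_nonzero[OF i] by (simp add: eigenvector_def)
  then have "complex_of_real (v $ i) \<in> spectrum C"
    by (auto simp: spectrum_def eigenvalue_def)
  then have "norm (complex_of_real (v $ i)) \<in> norm ` spectrum C" by (rule imageI)
  then have "norm (complex_of_real (v $ i)) \<le> spectral_radius C"
    using spectral_radius_mem_max(2)[OF C] i by simp
  then show ?thesis by (simp add: rho_def C_def)
qed

lemma quadratic_form_Xi:
  assumes v: "v \<in> carrier_vec n" and x: "x \<in> carrier_vec n"
  shows "x \<bullet> (Xi v *\<^sub>v x) = (\<Sum>i<n. v $ i * (x $ i)\<^sup>2)"
proof -
  have X: "Xi v \<in> carrier_mat n n" using v by (simp add: Xi_def)
  have "x \<bullet> (Xi v *\<^sub>v x) = qform n (\<lambda>i j. Xi v $$ (i, j)) (\<lambda>i. x $ i)"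
    by (rule scalar_prod_mult_mat_vec_qform[OF X x])
  also have "\<dots> = (\<Sum>i<n. \<Sum>j<n. if i = j then v $ i * (x $ i)\<^sup>2 else 0)"
    unfolding qform_def using v
    by (intro sum.cong refl) (auto simp: Xi_def mat_diag_def power2_eq_square)
  finally show ?thesis by simp
qed

lemma loewner_Xi_le:
  assumes v: "v \<in> carrier_vec n" and Q: "Q \<in> carrier_mat n n"
    and sym: "transpose_mat Q = Q" and pd: "pos_def Q" and n: "n > 0"
  shows "loewner_le (Xi v) ((rho (Xi v) / lambda_min Q) \<cdot>\<^sub>m Q)"
  unfolding loewner_le_def
proof
  define c where "c = rho (Xi v) / lambda_min Q"
  have lam: "lambda_min Q > 0" by (rule lambda_min_pos[OF Q sym n pd])
  have rho: "v $ i \<le> rho (Xi v)" if "i < n" for i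
    using abs_entry_le_rho_Xi[OF v that] by simp
  have "0 \<le> rho (Xi v)"
    using abs_entry_le_rho_Xi[OF v n] by simp
  then have c: "0 \<le> c" using lam by (simp add: c_def)
  have X: "Xi v \<in> carrier_mat n n" using v by (simp add: Xi_def)
  fix x :: "real vec" assume "x \<in> carrier_vec (dim_row (Xi v))"
  then have x: "x \<in> carrier_vec n" using X by simp
  have "c \<cdot>\<^sub>m Q - Xi v \<in> carrier_mat n n" by (rule minus_carrier_mat[OF X])
  then have "x \<bullet> ((c \<cdot>\<^sub>m Q - Xi v) *\<^sub>v x)
      = qform n (\<lambda>i j. (c \<cdot>\<^sub>m Q - Xi v) $$ (i, j)) (\<lambda>i. x $ i)"
    by (rule scalar_prod_mult_mat_vec_qform[OF _ x])
  also have "\<dots> = qform n (\<lambda>i j. c * Q $$ (i, j) - Xi v $$ (i, j)) (\<lambda>i. x $ i)"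
    unfolding qform_def using Q X by (intro sum.cong refl) simp
  also have "\<dots> = c * (x \<bullet> (Q *\<^sub>v x)) - x \<bullet> (Xi v *\<^sub>v x)"
    by (simp add: qform_linear scalar_prod_mult_mat_vec_qform[OF Q x]
        scalar_prod_mult_mat_vec_qform[OF X x])
  finally have split: "x \<bullet> ((c \<cdot>\<^sub>m Q - Xi v) *\<^sub>v x) = c * (x \<bullet> (Q *\<^sub>v x)) - x \<bullet> (Xi v *\<^sub>v x)" .
  have "x \<bullet> (Xi v *\<^sub>v x) \<le> c * (x \<bullet> (Q *\<^sub>v x))"
  proof -
    have "x \<bullet> (Xi v *\<^sub>v x) \<le> (\<Sum>i<n. rho (Xi v) * (x $ i)\<^sup>2)"
      unfolding quadratic_form_Xi[OF v x] by (intro sum_mono mult_right_mono rho) auto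
    also have "\<dots> = c * (lambda_min Q * (x \<bullet> x))"
      using lam x by (simp add: c_def scalar_prod_self_sqnorm sqnorm_def sum_distrib_left)
    also have "\<dots> \<le> c * (x \<bullet> (Q *\<^sub>v x))"
      by (rule mult_left_mono[OF lambda_min_le_quadratic_form(2)[OF Q sym n x] c])
    finally show ?thesis .
  qed
  with split show "0 \<le> x \<bullet> ((rho (Xi v) / lambda_min Q \<cdot>\<^sub>m Q - Xi v) *\<^sub>v x)"
    by (simp add: c_def)
qed

section \<open>Diagonal blocks of a Laplacian\<close>

lemma block_end_le_total:
  assumes "1 \<le> q" "q \<le> K"
  shows "block_start nk q + nk q \<le> (\<Sum>k\<in>{1..K}. nk k)"
proof -
  have "block_start nk q + nk q = (\<Sum>j\<in>{1..<Suc q}. nk j)"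
    unfolding block_start_def using assms by (simp add: sum.atLeastLessThan_Suc)
  also have "\<dots> \<le> (\<Sum>k\<in>{1..K}. nk k)" by (rule sum_mono2) (use assms in auto)
  finally show ?thesis .
qed

lemma block_end_le_start:
  assumes "1 \<le> k" "k < q"
  shows "block_start nk k + nk k \<le> block_start nk q"
proof -
  have "block_start nk k + nk k = (\<Sum>j\<in>{1..<Suc k}. nk j)"
    unfolding block_start_def using assms by (simp add: sum.atLeastLessThan_Suc)
  also have "\<dots> \<le> block_start nk q"
    unfolding block_start_def by (rule sum_mono2) (use assms in auto)
  finally show ?thesis .
qed

lemma laplacian_entry:
  assumes "A \<in> carrier_mat N N" "a < N" "b < N"
  shows "laplacian A $$ (a, b) = (if a = b then (\<Sum>p<N. A $$ (a, p)) else 0) - A $$ (a, b)"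
  using assms by (simp add: laplacian_def mat_diag_def)

lemma laplacian_diag_block_offdiag_nonpos:
  fixes A :: "real mat"
  assumes A: "A \<in> carrier_mat N N" and A_nonneg: "\<forall>i < N. \<forall>j < N. 0 \<le> A $$ (i, j)"
    and bound: "block_start nk k + nk k \<le> N" and ij: "i < nk k" "j < nk k" "i \<noteq> j"
  shows "block (laplacian A) nk k k $$ (i, j) \<le> 0"
  using ij bound A_nonneg by (simp add: block_def laplacian_entry[OF A])

lemma laplacian_diag_block_row_sum:
  fixes A :: "real mat"
  assumes A: "A \<in> carrier_mat N N" and bound: "block_start nk k + nk k \<le> N" and i: "i < nk k"
  defines "s \<equiv> block_start nk k"
  shows "row_sum (block (laplacian A) nk k k) i = (\<Sum>p\<in>{..<N} - {s..<s + nk k}. A $$ (s + i, p))"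
proof -
  have shift: "(\<Sum>p<nk k. A $$ (s + i, s + p)) = (\<Sum>p\<in>{s..<s + nk k}. A $$ (s + i, p))"
    by (rule sum.reindex_bij_witness[of _ "\<lambda>p. p - s" "\<lambda>p. s + p"]) auto
  have sub: "{s..<s + nk k} \<subseteq> {..<N}" using bound by (auto simp: s_def)
  have "row_sum (block (laplacian A) nk k k) i = (\<Sum>p<nk k. laplacian A $$ (s + i, s + p))"
    using i by (simp add: row_sum_def block_def s_def)
  also have "\<dots> = (\<Sum>p<nk k. (if i = p then (\<Sum>q<N. A $$ (s + i, q)) else 0) - A $$ (s + i, s + p))"
    using A bound i by (intro sum.cong refl) (simp add: laplacian_entry s_def)
  also have "\<dots> = (\<Sum>q<N. A $$ (s + i, q)) - (\<Sum>p\<in>{s..<s + nk k}. A $$ (s + i, p))"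
    using i by (simp add: sum_subtractf sum.delta shift)
  also have "\<dots> = (\<Sum>p\<in>{..<N} - {s..<s + nk k}. A $$ (s + i, p))"
    by (simp add: sum_diff[OF _ sub])
  finally show ?thesis .
qed

lemma laplacian_diag_block_row_sum_pos:
  fixes A :: "real mat"
  assumes A: "A \<in> carrier_mat N N" and A_nonneg: "\<forall>i < N. \<forall>j < N. 0 \<le> A $$ (i, j)"
    and N: "N = (\<Sum>k\<in>{1..K}. nk k)" and k: "1 \<le> k" and q: "k < q" "q \<le> K"
    and coupled: "block (laplacian A) nk k q \<noteq> 0\<^sub>m (nk k) (nk q)"
  shows "\<exists>i < nk k. 0 < row_sum (block (laplacian A) nk k k) i"
proof -
  define s where "s = block_start nk k"
  have bound: "s + nk k \<le> N" using block_end_le_total[of k K nk] k q N by (simp add: s_def)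
  have "\<exists>i < nk k. \<exists>j < nk q. laplacian A $$ (s + i, block_start nk q + j) \<noteq> 0"
  proof (rule ccontr)
    assume "\<not> ?thesis"
    then have "block (laplacian A) nk k q = 0\<^sub>m (nk k) (nk q)"
      by (intro eq_matI) (auto simp: block_def s_def)
    with coupled show False ..
  qed
  then obtain i j where ij: "i < nk k" "j < nk q"
    and ne: "laplacian A $$ (s + i, block_start nk q + j) \<noteq> 0" by blast
  define p where "p = block_start nk q + j"
  have p: "p < N" "p \<notin> {s..<s + nk k}"
    using block_end_le_total[of q K nk] block_end_le_start[OF k q(1), of nk] q ij N k
    by (auto simp: p_def s_def)
  have si: "s + i < N" using bound ij by simp
  have "A $$ (s + i, p) \<noteq> 0"
    using ne laplacian_entry[OF A si p(1)] p(2) ij(1) by (auto simp: p_def)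
  then have pos: "0 < A $$ (s + i, p)" using A_nonneg si p(1) by (simp add: order_less_le)
  have "0 < (\<Sum>p\<in>{..<N} - {s..<s + nk k}. A $$ (s + i, p))"
    by (rule sum_pos2[of _ p]) (use pos p si A_nonneg in auto)
  then show ?thesis
    using laplacian_diag_block_row_sum[of A N nk k i] A bound ij(1) by (auto simp: s_def)
qed

theorem mainTheorem7:
  fixes A :: "real mat" and N K :: nat and nk :: "nat \<Rightarrow> nat" and \<xi> :: "nat \<Rightarrow> real vec"
  assumes A_carrier: "A \<in> carrier_mat N N"
    and A_nonneg: "\<forall>i < N. \<forall>j < N. 0 \<le> A $$ (i, j)"
    and A_diag: "\<forall>i < N. A $$ (i, i) = 0"
    and K_pos: "K \<ge> 1"
    and nk_pos: "\<forall>k \<in> {1..K}. nk k \<ge> 1"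
    and N_sum: "N = (\<Sum>k\<in>{1..K}. nk k)"
    and upper: "\<forall>k \<in> {1..K}. \<forall>q \<in> {1..K}. q < k \<longrightarrow>
                  block (laplacian A) nk k q = 0\<^sub>m (nk k) (nk q)"
    and diag_irr: "\<forall>k \<in> {1..K}. irreducible_mat (block (laplacian A) nk k k) \<or> nk k = 1"
    and coupled: "\<forall>k \<in> {1..<K}. \<exists>q \<in> {k<..K}.
                  block (laplacian A) nk k q \<noteq> 0\<^sub>m (nk k) (nk q)"
    and xi_dim: "\<forall>k \<in> {1..<K}. \<xi> k \<in> carrier_vec (nk k)"
    and xi_pos: "\<forall>k \<in> {1..<K}. \<forall>i < nk k. \<xi> k $ i > 0"
    and xi_sum: "\<forall>k \<in> {1..<K}. (\<Sum>i<nk k. \<xi> k $ i) = 1"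
    and xi_left_eig: "\<forall>k \<in> {1..<K}.
                  transpose_mat (Ltilde (block (laplacian A) nk k k)) *\<^sub>v \<xi> k = 0\<^sub>v (nk k)"
  shows "\<forall>k \<in> {1..<K}.
     (let Lkk = block (laplacian A) nk k k;
          X = Xi (\<xi> k);
          R = sym_part (X * Ltilde Lkk);
          Q = sym_part (X * Lkk)
      in Q = R + X * Dmat Lkk
         \<and> pos_def Q
         \<and> loewner_le X ((rho X / lambda_min Q) \<cdot>\<^sub>m Q))"
proof
  fix k assume k: "k \<in> {1..<K}"
  define M where "M = block (laplacian A) nk k k"
  define Q where "Q = sym_part (Xi (\<xi> k) * M)"
  have M: "M \<in> carrier_mat (nk k) (nk k)" by (simp add: M_def block_def)
  have v: "\<xi> k \<in> carrier_vec (nk k)" using xi_dim k by blast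
  have n: "nk k > 0" using nk_pos[rule_format, of k] k by simp
  have bound: "block_start nk k + nk k \<le> N"
    using block_end_le_total[of k K nk] k N_sum by simp
  obtain q where "q \<in> {k<..K}" and q_block: "block (laplacian A) nk k q \<noteq> 0\<^sub>m (nk k) (nk q)"
    using coupled k by blast
  then have q: "k < q" "q \<le> K" by auto
  obtain i0 where i0: "i0 < nk k" "0 < row_sum M i0"
    using laplacian_diag_block_row_sum_pos[OF A_carrier A_nonneg N_sum _ q q_block] k
    unfolding M_def by auto
  have row_nonneg: "0 \<le> row_sum M i" if "i < nk k" for i
    unfolding M_def laplacian_diag_block_row_sum[OF A_carrier bound that]
    using bound A_nonneg that by (intro sum_nonneg) auto
  have pd: "pos_def Q"
    unfolding Q_def
  proof (rule pos_def_sym_part_Xi[OF M v _ _ _ row_nonneg i0])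
    show "\<And>i. i < nk k \<Longrightarrow> 0 < \<xi> k $ i" using xi_pos k by simp
    show "transpose_mat (Ltilde M) *\<^sub>v \<xi> k = 0\<^sub>v (nk k)" using xi_left_eig k by (simp add: M_def)
    show "\<And>i j. i < nk k \<Longrightarrow> j < nk k \<Longrightarrow> i \<noteq> j \<Longrightarrow> M $$ (i, j) \<le> 0"
      unfolding M_def by (rule laplacian_diag_block_offdiag_nonpos[OF A_carrier A_nonneg bound])
    show "irreducible_mat M \<or> nk k = 1" using diag_irr k by (simp add: M_def)
  qed
  have XM: "Xi (\<xi> k) * M \<in> carrier_mat (nk k) (nk k)" using Xi_mult[OF v M] by simp
  have "loewner_le (Xi (\<xi> k)) ((rho (Xi (\<xi> k)) / lambda_min Q) \<cdot>\<^sub>m Q)"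
    using loewner_Xi_le[OF v sym_part_carrier[OF XM] sym_part_symmetric[OF XM] _ n] pd
    by (simp add: Q_def)
  moreover have "Q = sym_part (Xi (\<xi> k) * Ltilde M) + Xi (\<xi> k) * Dmat M"
    unfolding Q_def by (rule sym_part_Xi_decomp[OF M v])
  ultimately show "let Lkk = block (laplacian A) nk k k; X = Xi (\<xi> k);
          R = sym_part (X * Ltilde Lkk); Q = sym_part (X * Lkk)
      in Q = R + X * Dmat Lkk \<and> pos_def Q \<and> loewner_le X ((rho X / lambda_min Q) \<cdot>\<^sub>m Q)"
    unfolding Let_def M_def[symmetric] Q_def[symmetric] using pd by blast
qed

end
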